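(* Let $G$ be a graph with $n$ vertices and $m$ edges, and let $r$ be an integer with $3\leq r\leq n/2$. If $G$ contains no cycle of length $r$, then \[ \mu_n(G)\leq -\frac{4m^2}{n^3}+2(r-3). \]
   Context: All graphs are finite, simple and undirected. $\mu_n(G)$ denotes the smallest eigenvalue of the adjacency matrix of $G$. *)

theory Defs
  imports "Jordan_Normal_Form.Char_Poly"
begin

definition simple_graph :: "nat \<Rightarrow> (nat \<Rightarrow> nat \<Rightarrow> bool) \<Rightarrow> bool" where
  "simple_graph n E \<longleftrightarrow> (\<forall>i<n. \<forall>j<n. E i j \<longrightarrow> E j i) \<and> (\<forall>i<n. \<not> E i i)"

definition edges :: "nat \<Rightarrow> (nat \<Rightarrow> nat \<Rightarrow> bool) \<Rightarrow> nat set set" where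
  "edges n E = {{i, j} | i j. i < n \<and> j < n \<and> E i j}"

definition num_edges :: "nat \<Rightarrow> (nat \<Rightarrow> nat \<Rightarrow> bool) \<Rightarrow> nat" where
  "num_edges n E = card (edges n E)"

definition adj_matrix :: "nat \<Rightarrow> (nat \<Rightarrow> nat \<Rightarrow> bool) \<Rightarrow> real mat" where
  "adj_matrix n E = mat n n (\<lambda>(i, j). if E i j then 1 else 0)"

definition smallest_eigenvalue :: "real mat \<Rightarrow> real" where
  "smallest_eigenvalue A = Min {k. eigenvalue A k}"

definition has_cycle :: "nat \<Rightarrow> (nat \<Rightarrow> nat \<Rightarrow> bool) \<Rightarrow> nat \<Rightarrow> bool" where
  "has_cycle n E r \<longleftrightarrow> r \<ge> 3 \<and> (\<exists>v :: nat \<Rightarrow> nat.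
      inj_on v {0..<r} \<and> (\<forall>i<r. v i < n) \<and> (\<forall>i<r. E (v i) (v ((i + 1) mod r))))"

end

theory Submission
  imports Defs "HOL-Analysis.Function_Topology" "HOL-Analysis.Convex"
begin

text \<open>Let \<open>\<lambda>\<close> be the largest eigenvalue of the adjacency matrix \<open>A\<close>, with unit eigenvector \<open>v\<close>,
  let \<open>\<mu>\<close> be the smallest one and let \<open>a\<^sub>j\<close> be the columns of \<open>A\<close>. Since \<open>A - \<mu>I\<close> is positive
  semidefinite and \<open>v \<cdot> a\<^sub>j = \<lambda> v\<^sub>j\<close>, projecting \<open>a\<^sub>j\<close> onto \<open>v\<close> gives
  \<open>a\<^sub>j\<^sup>T A a\<^sub>j - \<mu> |a\<^sub>j|\<^sup>2 \<ge> \<lambda>\<^sup>2 v\<^sub>j\<^sup>2 (\<lambda> - \<mu>)\<close>, and summing over \<open>j\<close> yields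
  \<open>tr A\<^sup>3 - \<mu> tr A\<^sup>2 \<ge> \<lambda>\<^sup>2 (\<lambda> - \<mu>)\<close>. Here \<open>tr A\<^sup>2 = 2m\<close>, and \<open>a\<^sub>j\<^sup>T A a\<^sub>j\<close> is twice the
  number of edges inside the neighbourhood of \<open>j\<close>. A path on \<open>r - 1\<close> vertices in that
  neighbourhood would close up with \<open>j\<close> into a cycle of length \<open>r\<close>, so by the Erdos--Gallai
  theorem for paths \<open>tr A\<^sup>3 \<le> (r - 3) \<cdot> 2m\<close>. Together with \<open>\<lambda>\<^sup>2 \<le> 2m\<close> and \<open>\<lambda> \<ge> 2m/n\<close>
  this gives the bound by elementary algebra.\<close>

section \<open>Rayleigh quotients of symmetric matrices\<close>

text \<open>Vectors and matrices of dimension \<open>n\<close> are functions on \<open>nat\<close> of which only the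
  indices below \<open>n\<close> matter.\<close>

definition dot :: "nat \<Rightarrow> (nat \<Rightarrow> real) \<Rightarrow> (nat \<Rightarrow> real) \<Rightarrow> real" where
  "dot n x y = (\<Sum>i<n. x i * y i)"

definition mat_vec :: "nat \<Rightarrow> (nat \<Rightarrow> nat \<Rightarrow> real) \<Rightarrow> (nat \<Rightarrow> real) \<Rightarrow> nat \<Rightarrow> real" where
  "mat_vec n a x i = (\<Sum>j<n. a i j * x j)"

definition bilin :: "nat \<Rightarrow> (nat \<Rightarrow> nat \<Rightarrow> real) \<Rightarrow> (nat \<Rightarrow> real) \<Rightarrow> (nat \<Rightarrow> real) \<Rightarrow> real" where
  "bilin n a x y = dot n x (mat_vec n a y)"

definition sym_entries :: "nat \<Rightarrow> (nat \<Rightarrow> nat \<Rightarrow> real) \<Rightarrow> bool" where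
  "sym_entries n a \<longleftrightarrow> (\<forall>i<n. \<forall>j<n. a i j = a j i)"

definition eigenpair :: "nat \<Rightarrow> (nat \<Rightarrow> nat \<Rightarrow> real) \<Rightarrow> real \<Rightarrow> (nat \<Rightarrow> real) \<Rightarrow> bool" where
  "eigenpair n a lam v \<longleftrightarrow> (\<forall>i<n. mat_vec n a v i = lam * v i)"

lemma dot_cong:
  "(\<And>i. i < n \<Longrightarrow> x i = x' i) \<Longrightarrow> (\<And>i. i < n \<Longrightarrow> y i = y' i) \<Longrightarrow> dot n x y = dot n x' y'"
  unfolding dot_def by (intro sum.cong) auto

lemma dot_commute: "dot n x y = dot n y x"
  unfolding dot_def by (simp add: mult.commute)

lemma dot_self_nonneg: "0 \<le> dot n x x"
  unfolding dot_def by (intro sum_nonneg) auto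

lemma dot_self_eq_0: "dot n x x = 0 \<Longrightarrow> i < n \<Longrightarrow> x i = 0"
  unfolding dot_def by (subst (asm) sum_nonneg_eq_0_iff) auto

lemma dot_self_add_scaled:
  "dot n (\<lambda>i. x i + t * y i) (\<lambda>i. x i + t * y i) = dot n x x + 2 * t * dot n x y + t^2 * dot n y y"
  unfolding dot_def
  by (simp add: algebra_simps sum.distrib sum_distrib_left power2_eq_square)

lemma dot_self_scaled: "dot n (\<lambda>i. c * x i) (\<lambda>i. c * x i) = c^2 * dot n x x"
  unfolding dot_def by (simp add: sum_distrib_left algebra_simps power2_eq_square)

lemma dot_unit_sq_le:
  assumes "dot n v v = 1"
  shows "(dot n v y)^2 \<le> dot n y y"
  using Cauchy_Schwarz_ineq_sum[of v y "{..<n}"] assms by (simp add: dot_def power2_eq_square)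

lemma bilin_cong:
  "(\<And>i. i < n \<Longrightarrow> x i = x' i) \<Longrightarrow> (\<And>i. i < n \<Longrightarrow> y i = y' i) \<Longrightarrow> bilin n a x y = bilin n a x' y'"
  unfolding bilin_def mat_vec_def by (intro dot_cong sum.cong) auto

lemma bilin_commute: "sym_entries n a \<Longrightarrow> bilin n a x y = bilin n a y x"
  unfolding bilin_def dot_def mat_vec_def sym_entries_def sum_distrib_left
  by (subst sum.swap) (auto intro!: sum.cong)

lemma bilin_self_add_scaled:
  assumes "sym_entries n a"
  shows "bilin n a (\<lambda>i. x i + t * y i) (\<lambda>i. x i + t * y i)
           = bilin n a x x + 2 * t * bilin n a x y + t^2 * bilin n a y y"
proof -
  have "bilin n a (\<lambda>i. x i + t * y i) (\<lambda>i. x i + t * y i)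
          = bilin n a x x + t * bilin n a x y + t * bilin n a y x + t^2 * bilin n a y y"
    unfolding bilin_def dot_def mat_vec_def
    by (simp add: algebra_simps sum.distrib sum_distrib_left power2_eq_square)
  then show ?thesis using bilin_commute[OF assms, of y x] by simp
qed

lemma bilin_self_scaled: "bilin n a (\<lambda>i. c * x i) (\<lambda>i. c * x i) = c^2 * bilin n a x x"
  unfolding bilin_def dot_def mat_vec_def
  by (simp add: sum_distrib_left algebra_simps power2_eq_square)

lemma bilin_uminus: "bilin n (\<lambda>i j. - a i j) x y = - bilin n a x y"
  unfolding bilin_def dot_def mat_vec_def by (simp add: sum_negf)

lemma bilin_eigenpair:
  assumes "eigenpair n a lam v"
  shows "bilin n a x v = lam * dot n x v"
proof -
  have "bilin n a x v = dot n x (\<lambda>i. lam * v i)"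
    unfolding bilin_def using assms by (intro dot_cong) (simp_all add: eigenpair_def)
  then show ?thesis by (simp add: dot_def sum_distrib_left algebra_simps)
qed

lemma dot_column_eigenpair:
  assumes "sym_entries n a" "eigenpair n a lam v" "j < n"
  shows "dot n v (\<lambda>i. a i j) = lam * v j"
proof -
  have "dot n v (\<lambda>i. a i j) = mat_vec n a v j"
    using assms(1,3) unfolding dot_def mat_vec_def sym_entries_def
    by (intro sum.cong) (simp_all add: mult.commute)
  then show ?thesis using assms(2,3) by (simp add: eigenpair_def)
qed

lemma continuous_on_coordinate [continuous_intros]: "continuous_on S (\<lambda>x::nat\<Rightarrow>real. x i)"
  by (rule continuous_on_subset[OF continuous_on_product_coordinates]) simp

text \<open>The coordinates from \<open>n\<close> on are pinned to \<open>0\<close>, which makes the unit sphere compact in the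
  product topology.\<close>

lemma compact_unit_sphere: "compact {x::nat\<Rightarrow>real. (\<forall>i\<ge>n. x i = 0) \<and> dot n x x = 1}"
  (is "compact ?K")
proof -
  define B where "B i = (if i < n then {-1..1} else {0::real})" for i
  have "compactin (product_topology (\<lambda>_. euclidean) UNIV) (PiE UNIV B)"
    unfolding compactin_PiE by (auto simp: B_def)
  then have "compact (PiE UNIV B)" by (simp add: euclidean_product_topology)
  moreover have "closed ?K"
    unfolding dot_def
    by (intro closed_Collect_conj closed_Collect_all closed_Collect_imp closed_Collect_eq
          continuous_intros) auto
  ultimately have "compact (PiE UNIV B \<inter> ?K)" by (rule compact_Int_closed)
  moreover have "?K \<subseteq> PiE UNIV B"
  proof
    fix x assume x: "x \<in> ?K"
    have "(x i)^2 \<le> 1" if "i < n" for i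
      using member_le_sum[of i "{..<n}" "\<lambda>i. (x i)^2"] that x by (simp add: dot_def power2_eq_square)
    then show "x \<in> PiE UNIV B"
      using x by (auto simp: B_def PiE_def extensional_def abs_square_le_1 abs_le_iff)
  qed
  ultimately show ?thesis by (simp add: Int_absorb1)
qed

lemma nonneg_quadratic_linear_coeff_eq_0:
  fixes s c :: real
  assumes nonneg: "\<And>t. 0 \<le> 2 * t * s + t^2 * c" and "0 \<le> s"
  shows "s = 0"
proof (rule ccontr)
  assume "s \<noteq> 0"
  with \<open>0 \<le> s\<close> have "0 < s" by simp
  define d where "d = \<bar>c\<bar> + 1"
  have "0 < d" "c \<le> d" unfolding d_def by auto
  have "2 * (- s / d) * s + (- s / d)^2 * c = (c - 2 * d) * s^2 / d^2"
    using \<open>0 < d\<close> by (simp add: field_simps power2_eq_square)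
  also have "\<dots> < 0"
    using \<open>0 < s\<close> \<open>0 < d\<close> \<open>c \<le> d\<close> by (intro divide_neg_pos mult_neg_pos) auto
  finally show False using nonneg[of "- s / d"] by simp
qed

lemma rayleigh_min_attained:
  assumes "0 < n"
  shows "\<exists>v. dot n v v = 1 \<and> (\<forall>x. bilin n a v v * dot n x x \<le> bilin n a x x)"
proof -
  define K where "K = {x::nat\<Rightarrow>real. (\<forall>i\<ge>n. x i = 0) \<and> dot n x x = 1}"
  have "compact K" unfolding K_def by (rule compact_unit_sphere)
  have "dot n (\<lambda>i. of_bool (i = 0)) (\<lambda>i. of_bool (i = 0)) = 1"
    using assms by (simp add: dot_def)
  then have "(\<lambda>i. of_bool (i = 0)) \<in> K" unfolding K_def using assms by auto
  then have "K \<noteq> {}" by blast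
  have "continuous_on K (\<lambda>x. bilin n a x x)"
    unfolding bilin_def dot_def mat_vec_def by (intro continuous_intros)
  obtain v where "v \<in> K" and v_min: "\<And>y. y \<in> K \<Longrightarrow> bilin n a v v \<le> bilin n a y y"
    using continuous_attains_inf[OF \<open>compact K\<close> \<open>K \<noteq> {}\<close> \<open>continuous_on K _\<close>] by blast
  have "bilin n a v v * dot n x x \<le> bilin n a x x" for x
  proof (cases "dot n x x = 0")
    case True
    then have "bilin n a x x = bilin n a (\<lambda>_. 0) (\<lambda>_. 0)"
      by (intro bilin_cong) (auto dest: dot_self_eq_0)
    then show ?thesis using True by (simp add: bilin_def dot_def)
  next
    case False
    then have "0 < dot n x x" using dot_self_nonneg[of n x] by simp
    define s where "s = sqrt (dot n x x)"
    have "0 < s" "s^2 = dot n x x" unfolding s_def using \<open>0 < dot n x x\<close> by auto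
    define y where "y = (\<lambda>i. if i < n then 1 / s * x i else 0)"
    have "dot n y y = dot n (\<lambda>i. 1 / s * x i) (\<lambda>i. 1 / s * x i)"
      by (rule dot_cong) (simp_all add: y_def)
    also have "\<dots> = dot n x x / s^2"
      using dot_self_scaled[of n "1 / s" x] by (simp add: power_divide)
    finally have "y \<in> K"
      using \<open>s^2 = dot n x x\<close> False by (simp add: K_def y_def)
    then have "bilin n a v v \<le> bilin n a y y" by (rule v_min)
    also have "bilin n a y y = bilin n a (\<lambda>i. 1 / s * x i) (\<lambda>i. 1 / s * x i)"
      by (rule bilin_cong) (simp_all add: y_def)
    also have "\<dots> = bilin n a x x / s^2"
      using bilin_self_scaled[of n a "1 / s" x] by (simp add: power_divide)
    finally show ?thesis
      using \<open>s^2 = dot n x x\<close> \<open>0 < dot n x x\<close> by (simp add: pos_le_divide_eq)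
  qed
  moreover have "dot n v v = 1" using \<open>v \<in> K\<close> by (simp add: K_def)
  ultimately show ?thesis by blast
qed

text \<open>Perturbing \<open>v\<close> along the residual \<open>w = A v - \<lambda> v\<close> changes the numerator of the Rayleigh
  quotient to first order by \<open>2 t |w|\<^sup>2\<close>, so minimality forces \<open>w = 0\<close>.\<close>

lemma rayleigh_minimizer_eigenpair:
  assumes sym: "sym_entries n a" and unit: "dot n v v = 1"
    and min: "\<And>x. bilin n a v v * dot n x x \<le> bilin n a x x"
  shows "eigenpair n a (bilin n a v v) v"
proof -
  define lam where "lam = bilin n a v v"
  define w where "w = (\<lambda>i. mat_vec n a v i - lam * v i)"
  have "bilin n a v w - lam * dot n v w = dot n w (\<lambda>i. mat_vec n a v i - lam * v i)"
    unfolding bilin_commute[OF sym, of v w]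
    by (simp add: bilin_def dot_def sum_subtractf sum_distrib_left algebra_simps)
  then have gap: "bilin n a v w - lam * dot n v w = dot n w w"
    by (simp add: w_def)
  have "0 \<le> 2 * t * dot n w w + t^2 * (bilin n a w w - lam * dot n w w)" for t
    using min[of "\<lambda>i. v i + t * w i"] gap unit
    unfolding bilin_self_add_scaled[OF sym] dot_self_add_scaled lam_def[symmetric]
    by (simp add: algebra_simps)
  then have "dot n w w = 0"
    using nonneg_quadratic_linear_coeff_eq_0 dot_self_nonneg by blast
  then show ?thesis
    unfolding eigenpair_def lam_def[symmetric] using dot_self_eq_0 by (fastforce simp: w_def)
qed

lemma min_rayleigh_eigenpair:
  assumes "sym_entries n a" "0 < n"
  shows "\<exists>lam v. dot n v v = 1 \<and> eigenpair n a lam v \<and> (\<forall>x. lam * dot n x x \<le> bilin n a x x)"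
  using rayleigh_min_attained[OF assms(2)] rayleigh_minimizer_eigenpair[OF assms(1)] by blast

lemma max_rayleigh_eigenpair:
  assumes "sym_entries n a" "0 < n"
  shows "\<exists>lam v. dot n v v = 1 \<and> eigenpair n a lam v \<and> (\<forall>x. bilin n a x x \<le> lam * dot n x x)"
proof -
  have "sym_entries n (\<lambda>i j. - a i j)" using assms(1) by (simp add: sym_entries_def)
  then obtain lam v where "dot n v v = 1" and eig: "eigenpair n (\<lambda>i j. - a i j) lam v"
    and min: "\<And>x. lam * dot n x x \<le> bilin n (\<lambda>i j. - a i j) x x"
    using min_rayleigh_eigenpair assms(2) by blast
  moreover have "eigenpair n a (- lam) v"
    using eig by (simp add: eigenpair_def mat_vec_def sum_negf minus_equation_iff)
  moreover have "bilin n a x x \<le> - lam * dot n x x" for x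
    using min[of x] unfolding bilin_uminus by linarith
  ultimately show ?thesis by blast
qed

text \<open>Apply the lower bound to the component \<open>y - (v \<cdot> y) v\<close> of \<open>y\<close> orthogonal to \<open>v\<close>.\<close>

lemma rayleigh_gap_bound:
  assumes sym: "sym_entries n a" and lower: "\<And>x. mu * dot n x x \<le> bilin n a x x"
    and unit: "dot n v v = 1" and eig: "eigenpair n a lam v"
  shows "(dot n v y)^2 * (lam - mu) \<le> bilin n a y y - mu * dot n y y"
proof -
  define c where "c = dot n v y"
  have "mu * dot n (\<lambda>i. y i + (- c) * v i) (\<lambda>i. y i + (- c) * v i)
          \<le> bilin n a (\<lambda>i. y i + (- c) * v i) (\<lambda>i. y i + (- c) * v i)"
    by (rule lower)
  moreover have "bilin n a y v = lam * c" "bilin n a v v = lam" "dot n y v = c"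
    using bilin_eigenpair[OF eig] unit by (simp_all add: c_def dot_commute)
  ultimately have "mu * (dot n y y - c^2) \<le> bilin n a y y - lam * c^2"
    unfolding bilin_self_add_scaled[OF sym] dot_self_add_scaled unit
    by (simp add: power2_eq_square algebra_simps)
  then show ?thesis unfolding c_def[symmetric] by (simp add: algebra_simps)
qed

lemma sum_dot_columns: "(\<Sum>j<n. dot n (\<lambda>i. a i j) (\<lambda>i. a i j)) = (\<Sum>i<n. \<Sum>j<n. (a i j)^2)"
  unfolding dot_def by (subst sum.swap) (simp add: power2_eq_square)

lemma eigenvalue_sq_le_sum_sq:
  assumes sym: "sym_entries n a" and unit: "dot n v v = 1" and eig: "eigenpair n a lam v"
  shows "lam^2 \<le> (\<Sum>i<n. \<Sum>j<n. (a i j)^2)"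
proof -
  have "lam^2 = lam^2 * dot n v v" using unit by simp
  also have "\<dots> = (\<Sum>j<n. (lam * v j)^2)"
    unfolding dot_def sum_distrib_left by (simp add: power_mult_distrib power2_eq_square mult_ac)
  also have "\<dots> \<le> (\<Sum>j<n. dot n (\<lambda>i. a i j) (\<lambda>i. a i j))"
    using dot_unit_sq_le[OF unit] dot_column_eigenpair[OF sym eig]
    by (intro sum_mono) (metis lessThan_iff)
  also have "\<dots> = (\<Sum>i<n. \<Sum>j<n. (a i j)^2)"
    by (rule sum_dot_columns)
  finally show ?thesis .
qed

lemma eigenvalue_gap_le_column_forms:
  assumes sym: "sym_entries n a" and lower: "\<And>x. mu * dot n x x \<le> bilin n a x x"
    and unit: "dot n v v = 1" and eig: "eigenpair n a lam v"
  shows "lam^2 * (lam - mu)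
           \<le> (\<Sum>j<n. bilin n a (\<lambda>i. a i j) (\<lambda>i. a i j)) - mu * (\<Sum>i<n. \<Sum>j<n. (a i j)^2)"
proof -
  have "lam^2 * (lam - mu) = lam^2 * (lam - mu) * dot n v v" using unit by simp
  also have "\<dots> = (\<Sum>j<n. (lam * v j)^2 * (lam - mu))"
    unfolding dot_def sum_distrib_left by (simp add: power_mult_distrib power2_eq_square mult_ac)
  also have "\<dots> \<le> (\<Sum>j<n. bilin n a (\<lambda>i. a i j) (\<lambda>i. a i j) - mu * dot n (\<lambda>i. a i j) (\<lambda>i. a i j))"
    using rayleigh_gap_bound[OF sym lower unit eig] dot_column_eigenpair[OF sym eig]
    by (intro sum_mono) (metis lessThan_iff)
  also have "\<dots> = (\<Sum>j<n. bilin n a (\<lambda>i. a i j) (\<lambda>i. a i j)) - mu * (\<Sum>i<n. \<Sum>j<n. (a i j)^2)"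
    by (simp add: sum_subtractf sum_distrib_left[symmetric] sum_dot_columns)
  finally show ?thesis .
qed

lemma spectral_estimate_arith:
  fixes mu lam M T K n :: real
  assumes "mu \<le> lam" "M \<le> lam * n" "lam^2 \<le> M" "lam^2 * (lam - mu) \<le> T - mu * M"
    and "T \<le> K * M" "0 \<le> K" "0 < n"
  shows "mu \<le> 2 * K - M^2 / n^3"
proof -
  have "0 \<le> M" using assms(3) by (meson order_trans zero_le_power2)
  have "mu * lam^2 \<le> K * M"
  proof (cases "mu \<le> 0")
    case True
    then have "mu * lam^2 \<le> 0" by (simp add: mult_nonpos_nonneg)
    also have "0 \<le> K * M" using \<open>0 \<le> M\<close> \<open>0 \<le> K\<close> by simp
    finally show ?thesis .
  next
    case False
    have "mu * lam^2 \<le> lam * lam^2"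
      using \<open>mu \<le> lam\<close> by (simp add: mult_right_mono)
    also have "\<dots> = lam^3" by (simp add: power3_eq_cube power2_eq_square)
    also have "\<dots> \<le> K * M - mu * (M - lam^2)"
      using assms(4,5) by (simp add: power3_eq_cube power2_eq_square algebra_simps)
    also have "\<dots> \<le> K * M" using False assms(3) by simp
    finally show ?thesis .
  qed
  then have cube: "mu * M \<le> 2 * K * M - lam^3"
    using assms(4,5) by (simp add: power3_eq_cube power2_eq_square algebra_simps)
  show ?thesis
  proof (cases "M = 0")
    case True
    then have "lam = 0" using assms(3) by simp
    then show ?thesis using True assms(1,6) by simp
  next
    case False
    then have "0 < M" using \<open>0 \<le> M\<close> by simp
    have "M / n \<le> lam" using assms(2,7) by (simp add: divide_le_eq mult.commute)
    then have "(M / n)^3 \<le> lam^3"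
      using \<open>0 < M\<close> assms(7) by (intro power_mono) auto
    then have "M^2 / n^3 \<le> lam^3 / M"
      using \<open>0 < M\<close> by (simp add: power_divide field_simps power3_eq_cube power2_eq_square)
    moreover have "mu \<le> 2 * K - lam^3 / M"
      using cube \<open>0 < M\<close> by (simp add: field_simps)
    ultimately show ?thesis by linarith
  qed
qed

text \<open>For symmetric \<open>a\<close> the sum of the column forms is \<open>tr A\<^sup>3\<close>, and for \<open>0/1\<close> entries the sum
  of all entries is \<open>tr A\<^sup>2\<close>.\<close>

theorem rayleigh_lower_bound_le:
  assumes sym: "sym_entries n a" and zero_one: "\<And>i j. i < n \<Longrightarrow> j < n \<Longrightarrow> a i j \<in> {0, 1}"
    and "0 < n" and lower: "\<And>x. mu * dot n x x \<le> bilin n a x x"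
    and cube: "(\<Sum>j<n. bilin n a (\<lambda>i. a i j) (\<lambda>i. a i j)) \<le> K * (\<Sum>i<n. \<Sum>j<n. a i j)"
    and "0 \<le> K"
  shows "mu \<le> 2 * K - (\<Sum>i<n. \<Sum>j<n. a i j)^2 / n^3"
proof -
  obtain lam v where unit: "dot n v v = 1" and eig: "eigenpair n a lam v"
    and upper: "\<And>x. bilin n a x x \<le> lam * dot n x x"
    using max_rayleigh_eigenpair[OF sym \<open>0 < n\<close>] by blast
  have sq: "(\<Sum>i<n. \<Sum>j<n. (a i j)^2) = (\<Sum>i<n. \<Sum>j<n. a i j)"
    using zero_one by (intro sum.cong refl) (fastforce simp: power2_eq_square)
  have "mu \<le> lam"
    using lower[of v] unit bilin_eigenpair[OF eig, of v] by simp
  moreover have "(\<Sum>i<n. \<Sum>j<n. a i j) \<le> lam * n"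
    using upper[of "\<lambda>_. 1"] by (simp add: bilin_def dot_def mat_vec_def)
  moreover have "lam^2 \<le> (\<Sum>i<n. \<Sum>j<n. a i j)"
    using eigenvalue_sq_le_sum_sq[OF sym unit eig] sq by simp
  moreover have "lam^2 * (lam - mu)
      \<le> (\<Sum>j<n. bilin n a (\<lambda>i. a i j) (\<lambda>i. a i j)) - mu * (\<Sum>i<n. \<Sum>j<n. a i j)"
    using eigenvalue_gap_le_column_forms[OF sym lower unit eig] sq by simp
  ultimately show ?thesis
    using spectral_estimate_arith cube \<open>0 \<le> K\<close> \<open>0 < n\<close> by simp
qed

section \<open>Long paths and the Erdos--Gallai theorem\<close>

definition degree_sum :: "('a \<Rightarrow> 'a \<Rightarrow> bool) \<Rightarrow> 'a set \<Rightarrow> nat" where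
  "degree_sum E S = (\<Sum>u\<in>S. card {w\<in>S. E u w})"

definition is_path :: "('a \<Rightarrow> 'a \<Rightarrow> bool) \<Rightarrow> 'a set \<Rightarrow> 'a list \<Rightarrow> bool" where
  "is_path E S xs \<longleftrightarrow> distinct xs \<and> set xs \<subseteq> S \<and> successively E xs"

definition is_cycle :: "('a \<Rightarrow> 'a \<Rightarrow> bool) \<Rightarrow> 'a set \<Rightarrow> 'a list \<Rightarrow> bool" where
  "is_cycle E S xs \<longleftrightarrow> is_path E S xs \<and> xs \<noteq> [] \<and> E (last xs) (hd xs)"

definition longest_path :: "('a \<Rightarrow> 'a \<Rightarrow> bool) \<Rightarrow> 'a set \<Rightarrow> 'a list \<Rightarrow> bool" where
  "longest_path E S xs \<longleftrightarrow> is_path E S xs \<and> (\<forall>ys. is_path E S ys \<longrightarrow> length ys \<le> length xs)"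

lemma degree_sum_eq_card_pairs:
  "finite S \<Longrightarrow> degree_sum E S = card (SIGMA u:S. {w\<in>S. E u w})"
  unfolding degree_sum_def by (simp add: card_SigmaI)

lemma degree_sum_le_card:
  assumes "finite S" and irrefl: "\<And>x. \<not> E x x"
  shows "degree_sum E S \<le> card S * (card S - 1)"
proof -
  have "card {w\<in>S. E u w} \<le> card S - 1" if "u \<in> S" for u
  proof -
    have "card {w\<in>S. E u w} \<le> card (S - {u})"
      using assms by (intro card_mono) auto
    then show ?thesis using that \<open>finite S\<close> by simp
  qed
  then show ?thesis
    unfolding degree_sum_def using sum_bounded_above[of S "\<lambda>u. card {w\<in>S. E u w}"] by simp
qed

lemma degree_sum_remove:
  assumes "finite S" "u \<in> S" and sym: "\<And>x y. E x y \<Longrightarrow> E y x" and irrefl: "\<And>x. \<not> E x x"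
  shows "degree_sum E S = degree_sum E (S - {u}) + 2 * card {w\<in>S. E u w}"
proof -
  let ?N = "{w\<in>S. E u w}"
  let ?X = "SIGMA x:S - {u}. {w\<in>S - {u}. E x w}"
  have "finite ?X" "finite ?N" using assms(1) by auto
  have sym_iff: "E x y \<longleftrightarrow> E y x" for x y using sym by blast
  have "degree_sum E S = card (?X \<union> {u} \<times> ?N \<union> ?N \<times> {u})"
    unfolding degree_sum_eq_card_pairs[OF \<open>finite S\<close>]
    using assms(2) irrefl sym_iff by (intro arg_cong[where f = card]) auto
  also have "\<dots> = card (?X \<union> {u} \<times> ?N) + card (?N \<times> {u})"
    using \<open>finite ?X\<close> \<open>finite ?N\<close> irrefl by (intro card_Un_disjoint) auto
  also have "\<dots> = card ?X + card ({u} \<times> ?N) + card (?N \<times> {u})"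
    using \<open>finite ?X\<close> \<open>finite ?N\<close> by (subst card_Un_disjoint) auto
  also have "\<dots> = degree_sum E (S - {u}) + 2 * card ?N"
    using assms(1) by (simp add: degree_sum_eq_card_pairs card_cartesian_product)
  finally show ?thesis .
qed

lemma degree_sum_split:
  assumes "finite S" "P \<subseteq> S" and sym: "\<And>x y. E x y \<Longrightarrow> E y x"
    and closed: "\<And>u w. u \<in> P \<Longrightarrow> w \<in> S \<Longrightarrow> E u w \<Longrightarrow> w \<in> P"
  shows "degree_sum E S = degree_sum E P + degree_sum E (S - P)"
proof -
  have "{w\<in>S. E u w} = {w\<in>P. E u w}" if "u \<in> P" for u
    using closed[OF that] assms(2) by blast
  moreover have "{w\<in>S. E u w} = {w\<in>S - P. E u w}" if "u \<in> S - P" for u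
  proof -
    have "w \<notin> P" if "E u w" for w
      using closed[of w u] sym[OF that] \<open>u \<in> S - P\<close> by blast
    then show ?thesis by blast
  qed
  ultimately show ?thesis
    unfolding degree_sum_def sum.subset_diff[OF assms(2,1)] by (simp add: add.commute)
qed

lemma longest_path_exists:
  assumes "finite S" "S \<noteq> {}"
  shows "\<exists>xs. longest_path E S xs \<and> xs \<noteq> []"
proof -
  obtain u where "u \<in> S" using assms(2) by blast
  then have "is_path E S [u]" by (simp add: is_path_def)
  moreover have "length ys < Suc (card S)" if "is_path E S ys" for ys
    using that assms(1) unfolding is_path_def by (metis card_mono distinct_card less_Suc_eq_le)
  ultimately obtain xs where "is_path E S xs" "\<And>ys. is_path E S ys \<Longrightarrow> length ys \<le> length xs"
    using ex_has_greatest_nat[of "is_path E S" "[u]" length "Suc (card S)"] by blast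
  moreover from this have "xs \<noteq> []" using \<open>is_path E S [u]\<close> by fastforce
  ultimately show ?thesis unfolding longest_path_def by blast
qed

lemma longest_path_hd_neighbour:
  assumes "longest_path E S xs" "xs \<noteq> []" and sym: "\<And>x y. E x y \<Longrightarrow> E y x"
    and "w \<in> S" "E (hd xs) w"
  shows "w \<in> set xs"
proof (rule ccontr)
  assume "w \<notin> set xs"
  moreover have "E w (hd xs)" using sym assms(5) .
  ultimately have "is_path E S (w # xs)"
    using assms(1,2,4) by (cases xs) (auto simp: longest_path_def is_path_def)
  then have "length (w # xs) \<le> length xs" using assms(1) unfolding longest_path_def by blast
  then show False by simp
qed

lemma longest_path_last_neighbour:
  assumes "longest_path E S xs" "xs \<noteq> []" and "w \<in> S" "E (last xs) w"
  shows "w \<in> set xs"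
proof (rule ccontr)
  assume "w \<notin> set xs"
  with assms have "is_path E S (xs @ [w])"
    by (auto simp: longest_path_def is_path_def successively_append_iff)
  then have "length (xs @ [w]) \<le> length xs" using assms(1) unfolding longest_path_def by blast
  then show False by simp
qed

lemma successively_rotate:
  assumes "successively E c" "c \<noteq> []" "E (last c) (hd c)" "s < length c"
  shows "successively E (rotate s c)" "hd (rotate s c) = c ! s"
proof -
  have rot: "rotate s c = drop s c @ take s c" using assms(4) by (simp add: rotate_drop_take)
  show "hd (rotate s c) = c ! s"
    using assms(4) unfolding rot by (simp add: hd_drop_conv_nth)
  show "successively E (rotate s c)"
  proof (cases "s = 0")
    case True
    then show ?thesis using assms(1) by simp
  next
    case False
    have "successively E (take s c)" "successively E (drop s c)"
      using assms(1) successively_append_iff[of E "take s c" "drop s c"] by auto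
    moreover have "hd (take s c) = hd c" "last (drop s c) = last c"
      using False assms(2,4) by (simp_all add: hd_take)
    ultimately show ?thesis
      unfolding rot using assms(3) by (simp add: successively_append_iff)
  qed
qed

lemma longest_cycle_closed:
  assumes "is_cycle E S c" and longest: "\<And>ys. is_path E S ys \<Longrightarrow> length ys \<le> length c"
    and sym: "\<And>x y. E x y \<Longrightarrow> E y x" and "u \<in> set c" "w \<in> S" "E u w"
  shows "w \<in> set c"
proof (rule ccontr)
  assume "w \<notin> set c"
  obtain s where "s < length c" "c ! s = u" using \<open>u \<in> set c\<close> by (auto simp: in_set_conv_nth)
  then have "successively E (rotate s c)" "hd (rotate s c) = u"
    using successively_rotate[of E c s] assms(1) by (auto simp: is_cycle_def is_path_def)
  moreover have "rotate s c \<noteq> []" using assms(1) by (simp add: is_cycle_def)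
  ultimately have "successively E (w # rotate s c)"
    using sym[OF \<open>E u w\<close>] by (simp add: successively_Cons)
  then have "is_path E S (w # rotate s c)"
    using assms(1,5) \<open>w \<notin> set c\<close> by (simp add: is_cycle_def is_path_def)
  then have "length (w # rotate s c) \<le> length c" by (rule longest)
  then show False by simp
qed

lemma path_crossing_cycle:
  assumes "is_path E S xs" "Suc i < length xs" and sym: "\<And>x y. E x y \<Longrightarrow> E y x"
    and "E (hd xs) (xs ! Suc i)" "E (xs ! i) (last xs)"
  shows "\<exists>c. is_cycle E S c \<and> set c = set xs \<and> length c = length xs"
proof -
  define c where "c = take (Suc i) xs @ rev (drop (Suc i) xs)"
  have set_c: "set c = set xs"
    unfolding c_def using set_append[of "take (Suc i) xs" "drop (Suc i) xs"] by simp
  have distinct_c: "distinct c"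
    using assms(1) distinct_append[of "take (Suc i) xs" "drop (Suc i) xs"]
    unfolding c_def is_path_def by simp
  have "successively E (take (Suc i) xs)" "successively E (drop (Suc i) xs)"
    using assms(1) successively_append_iff[of E "take (Suc i) xs" "drop (Suc i) xs"]
    by (auto simp: is_path_def)
  moreover have "successively (\<lambda>x y. E y x) (drop (Suc i) xs)"
    using \<open>successively E (drop (Suc i) xs)\<close> by (rule successively_mono) (erule sym)
  then have "successively E (rev (drop (Suc i) xs))" by simp
  moreover have "last (take (Suc i) xs) = xs ! i" "hd (rev (drop (Suc i) xs)) = last xs"
    using assms(2) by (simp_all add: take_Suc_conv_app_nth hd_rev)
  ultimately have "successively E c"
    using assms(5) unfolding c_def by (simp add: successively_append_iff)
  moreover have "last c = xs ! Suc i" "hd c = hd xs"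
    using assms(2) unfolding c_def by (simp_all add: last_rev hd_drop_conv_nth hd_append hd_take)
  then have "E (last c) (hd c)" using sym[OF assms(4)] by simp
  moreover have "c \<noteq> []" using assms(2) by (simp add: c_def)
  ultimately show ?thesis
    using assms(1) set_c distinct_c
    by (intro exI[of _ c]) (simp add: is_cycle_def is_path_def c_def)
qed

lemma is_path_mono: "is_path E T xs \<Longrightarrow> T \<subseteq> S \<Longrightarrow> is_path E S xs"
  unfolding is_path_def by blast

lemma card_hd_neighbours_le:
  assumes longest: "longest_path E S xs" and "xs \<noteq> []"
    and sym: "\<And>x y. E x y \<Longrightarrow> E y x" and irrefl: "\<And>x. \<not> E x x"
  shows "card {w\<in>S. E (hd xs) w} \<le> card {i\<in>{..<length xs - 1}. E (hd xs) (xs ! Suc i)}"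
    (is "_ \<le> card ?I")
proof -
  have "{w\<in>S. E (hd xs) w} \<subseteq> (\<lambda>i. xs ! Suc i) ` ?I"
  proof
    fix w assume w: "w \<in> {w\<in>S. E (hd xs) w}"
    then obtain j where j: "j < length xs" "xs ! j = w"
      using longest_path_hd_neighbour[OF longest \<open>xs \<noteq> []\<close> sym] by (auto simp: in_set_conv_nth)
    moreover have "j \<noteq> 0" using w j irrefl[of w] \<open>xs \<noteq> []\<close> by (cases j) (auto simp: hd_conv_nth)
    ultimately show "w \<in> (\<lambda>i. xs ! Suc i) ` ?I"
      using w by (intro image_eqI[of _ _ "j - 1"]) auto
  qed
  then have "card {w\<in>S. E (hd xs) w} \<le> card ((\<lambda>i. xs ! Suc i) ` ?I)"
    by (rule card_mono[rotated]) simp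
  also have "\<dots> \<le> card ?I" by (rule card_image_le) simp
  finally show ?thesis .
qed

lemma card_last_neighbours_le:
  assumes longest: "longest_path E S xs" and "xs \<noteq> []"
    and sym: "\<And>x y. E x y \<Longrightarrow> E y x" and irrefl: "\<And>x. \<not> E x x"
  shows "card {w\<in>S. E (last xs) w} \<le> card {i\<in>{..<length xs - 1}. E (xs ! i) (last xs)}"
    (is "_ \<le> card ?I")
proof -
  have "{w\<in>S. E (last xs) w} \<subseteq> (\<lambda>i. xs ! i) ` ?I"
  proof
    fix w assume w: "w \<in> {w\<in>S. E (last xs) w}"
    then obtain j where j: "j < length xs" "xs ! j = w"
      using longest_path_last_neighbour[OF longest \<open>xs \<noteq> []\<close>] by (auto simp: in_set_conv_nth)
    moreover have "j \<noteq> length xs - 1" using w j irrefl \<open>xs \<noteq> []\<close> by (auto simp: last_conv_nth)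
    moreover have "E w (last xs)" using w sym by blast
    ultimately show "w \<in> (\<lambda>i. xs ! i) ` ?I"
      by (intro image_eqI[of _ _ j]) auto
  qed
  then have "card {w\<in>S. E (last xs) w} \<le> card ((\<lambda>i. xs ! i) ` ?I)"
    by (rule card_mono[rotated]) simp
  also have "\<dots> \<le> card ?I" by (rule card_image_le) simp
  finally show ?thesis .
qed

text \<open>Pigeonhole: among the first \<open>length xs - 1\<close> positions, those followed by a neighbour of
  the head and those holding a neighbour of the tail must overlap.\<close>

lemma longest_path_crossing:
  assumes longest: "longest_path E S xs" and "xs \<noteq> []"
    and sym: "\<And>x y. E x y \<Longrightarrow> E y x" and irrefl: "\<And>x. \<not> E x x"
    and degrees: "length xs \<le> card {w\<in>S. E (hd xs) w} + card {w\<in>S. E (last xs) w}"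
  shows "\<exists>i. Suc i < length xs \<and> E (hd xs) (xs ! Suc i) \<and> E (xs ! i) (last xs)"
proof -
  let ?I0 = "{i\<in>{..<length xs - 1}. E (hd xs) (xs ! Suc i)}"
  let ?I1 = "{i\<in>{..<length xs - 1}. E (xs ! i) (last xs)}"
  have "?I0 \<inter> ?I1 \<noteq> {}"
  proof
    assume "?I0 \<inter> ?I1 = {}"
    then have "card ?I0 + card ?I1 = card (?I0 \<union> ?I1)" by (simp add: card_Un_disjoint)
    also have "\<dots> \<le> card {..<length xs - 1}" by (intro card_mono) auto
    finally have "card ?I0 + card ?I1 < length xs" using \<open>xs \<noteq> []\<close> by (cases xs) auto
    then show False
      using degrees card_hd_neighbours_le[OF assms(1-4)] card_last_neighbours_le[OF assms(1-4)]
      by linarith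
  qed
  then show ?thesis by (auto simp: less_diff_conv)
qed

text \<open>Either some vertex has degree at most \<open>(k - 2) / 2\<close>, or the endpoints of a longest path
  have so many neighbours, all on the path, that its vertices carry a cycle; by maximality
  that cycle is then a whole connected component, with fewer than \<open>k\<close> vertices.\<close>

lemma erdos_gallai_removable_set:
  assumes "finite S" "S \<noteq> {}" and sym: "\<And>x y. E x y \<Longrightarrow> E y x" and irrefl: "\<And>x. \<not> E x x"
    and short: "\<And>xs. is_path E S xs \<Longrightarrow> length xs < k"
  shows "\<exists>P. P \<subseteq> S \<and> P \<noteq> {} \<and> degree_sum E S \<le> degree_sum E (S - P) + (k - 2) * card P"
proof -
  obtain xs where longest: "longest_path E S xs" and "xs \<noteq> []"
    using longest_path_exists[OF assms(1,2)] by blast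
  then have "length xs < k" "hd xs \<in> S" "last xs \<in> S"
    using short by (auto simp: longest_path_def is_path_def)
  show ?thesis
  proof (cases "\<exists>z\<in>S. 2 * card {w\<in>S. E z w} \<le> k - 2")
    case True
    then obtain z where "z \<in> S" "2 * card {w\<in>S. E z w} \<le> k - 2" by blast
    then show ?thesis
      using degree_sum_remove[of S z E, OF \<open>finite S\<close> \<open>z \<in> S\<close> sym irrefl]
      by (intro exI[of _ "{z}"]) auto
  next
    case False
    then have "k - 2 < 2 * card {w\<in>S. E (hd xs) w}" "k - 2 < 2 * card {w\<in>S. E (last xs) w}"
      using \<open>hd xs \<in> S\<close> \<open>last xs \<in> S\<close> by auto
    then have "length xs \<le> card {w\<in>S. E (hd xs) w} + card {w\<in>S. E (last xs) w}"
      using \<open>length xs < k\<close> by linarith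
    then obtain i where "Suc i < length xs" "E (hd xs) (xs ! Suc i)" "E (xs ! i) (last xs)"
      using longest_path_crossing[OF longest \<open>xs \<noteq> []\<close> sym irrefl] by blast
    then obtain c where cycle: "is_cycle E S c" and "set c = set xs" "length c = length xs"
      using path_crossing_cycle[of E S xs i] longest sym by (auto simp: longest_path_def)
    define P where "P = set c"
    have "P \<subseteq> S" "finite P" "P \<noteq> {}" "card P = length xs"
      using cycle distinct_card[of c] \<open>length c = length xs\<close>
      by (auto simp: P_def is_cycle_def is_path_def)
    have closed: "w \<in> P" if "u \<in> P" "w \<in> S" "E u w" for u w
      using longest_cycle_closed[OF cycle _ sym that[unfolded P_def]] longest \<open>length c = length xs\<close>
      unfolding P_def longest_path_def by simp
    have "card P - 1 \<le> k - 2" using \<open>card P = length xs\<close> \<open>length xs < k\<close> by linarith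
    have "degree_sum E P \<le> card P * (card P - 1)"
      using \<open>finite P\<close> irrefl by (rule degree_sum_le_card)
    also have "\<dots> \<le> card P * (k - 2)"
      using \<open>card P - 1 \<le> k - 2\<close> by (rule mult_le_mono2)
    finally show ?thesis
      using degree_sum_split[of S P E, OF \<open>finite S\<close> \<open>P \<subseteq> S\<close> sym closed] \<open>P \<subseteq> S\<close> \<open>P \<noteq> {}\<close>
      by (intro exI[of _ P]) (simp add: mult.commute)
  qed
qed

theorem erdos_gallai_paths:
  assumes "finite S" and sym: "\<And>x y. E x y \<Longrightarrow> E y x" and irrefl: "\<And>x. \<not> E x x"
    and short: "\<And>xs. is_path E S xs \<Longrightarrow> length xs < k"
  shows "degree_sum E S \<le> (k - 2) * card S"
  using assms(1) short
proof (induction "card S" arbitrary: S rule: less_induct)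
  case less
  show ?case
  proof (cases "S = {}")
    case True
    then show ?thesis by (simp add: degree_sum_def)
  next
    case False
    then obtain P where "P \<subseteq> S" "P \<noteq> {}"
      and removal: "degree_sum E S \<le> degree_sum E (S - P) + (k - 2) * card P"
      using erdos_gallai_removable_set[of S E k, OF less.prems(1) False sym irrefl less.prems(2)] by blast
    have "finite P" using \<open>P \<subseteq> S\<close> less.prems(1) finite_subset by blast
    have "card (S - P) < card S"
      using less.prems(1) \<open>P \<subseteq> S\<close> \<open>P \<noteq> {}\<close> by (intro psubset_card_mono) auto
    then have "degree_sum E (S - P) \<le> (k - 2) * card (S - P)"
      using less.prems is_path_mono[of E "S - P" _ S] by (intro less.hyps) auto
    moreover have "card S = card P + card (S - P)"
      using less.prems(1) \<open>finite P\<close> \<open>P \<subseteq> S\<close> by (simp add: card_Diff_subset card_mono)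
    ultimately show ?thesis using removal by (simp add: add_mult_distrib2)
  qed
qed

section \<open>Adjacency matrices of graphs without a given cycle length\<close>

text \<open>Restricting \<open>E\<close> to the vertex set \<open>{..<n}\<close> makes it symmetric and irreflexive on all
  of \<open>nat\<close>.\<close>

definition adjacent :: "nat \<Rightarrow> (nat \<Rightarrow> nat \<Rightarrow> bool) \<Rightarrow> nat \<Rightarrow> nat \<Rightarrow> bool" where
  "adjacent n E i j \<longleftrightarrow> i < n \<and> j < n \<and> E i j"

lemma adjacent_commute: "simple_graph n E \<Longrightarrow> adjacent n E i j \<longleftrightarrow> adjacent n E j i"
  unfolding simple_graph_def adjacent_def by blast

lemma adjacent_sym: "simple_graph n E \<Longrightarrow> adjacent n E i j \<Longrightarrow> adjacent n E j i"
  by (simp add: adjacent_commute)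

lemma adjacent_irrefl: "simple_graph n E \<Longrightarrow> \<not> adjacent n E i i"
  unfolding simple_graph_def adjacent_def by blast

lemma has_cycle_if_is_cycle:
  assumes "is_cycle (adjacent n E) S zs" "3 \<le> length zs"
  shows "has_cycle n E (length zs)"
  unfolding has_cycle_def
proof (intro conjI exI[of _ "\<lambda>i. zs ! i"] allI impI)
  let ?r = "length zs"
  have succ: "successively (adjacent n E) zs" and "distinct zs" and "zs \<noteq> []"
    and closing: "adjacent n E (last zs) (hd zs)"
    using assms(1) by (auto simp: is_cycle_def is_path_def)
  show "3 \<le> ?r" by (rule assms(2))
  show "inj_on (\<lambda>i. zs ! i) {0..<?r}"
    using \<open>distinct zs\<close> by (simp add: inj_on_def nth_eq_iff_index_eq)
  have step: "adjacent n E (zs ! i) (zs ! ((i + 1) mod ?r))" if "i < ?r" for i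
  proof (cases "i + 1 < ?r")
    case True
    then show ?thesis using successively_nth[OF succ, of i] by simp
  next
    case False
    then have "i = ?r - 1" using that by simp
    then show ?thesis
      using closing \<open>zs \<noteq> []\<close> by (simp add: last_conv_nth hd_conv_nth)
  qed
  show "zs ! i < n" if "i < ?r" for i
    using step[OF that] by (simp add: adjacent_def)
  show "E (zs ! i) (zs ! ((i + 1) mod ?r))" if "i < ?r" for i
    using step[OF that] by (simp add: adjacent_def)
qed

lemma neighbourhood_paths_short:
  assumes "simple_graph n E" "\<not> has_cycle n E r" "3 \<le> r"
    and path: "is_path (adjacent n E) {i. adjacent n E j i} xs"
  shows "length xs < r - 1"
proof (rule ccontr)
  assume "\<not> length xs < r - 1"
  define ys where "ys = take (r - 1) xs"
  have "length ys = r - 1" using \<open>\<not> length xs < r - 1\<close> by (simp add: ys_def)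
  then have "ys \<noteq> []" using \<open>3 \<le> r\<close> by auto
  have "is_path (adjacent n E) {i. adjacent n E j i} ys"
    using path successively_append_iff[of "adjacent n E" ys "drop (r - 1) xs"]
    unfolding is_path_def ys_def by (auto dest: in_set_takeD)
  moreover from this have "adjacent n E j (last ys)"
    using last_in_set[OF \<open>ys \<noteq> []\<close>] by (auto simp: is_path_def)
  then have "adjacent n E (last ys) j" by (rule adjacent_sym[OF assms(1)])
  ultimately have "is_cycle (adjacent n E) UNIV (j # ys)"
    using \<open>ys \<noteq> []\<close> adjacent_irrefl[OF assms(1), of j]
    by (cases ys) (auto simp: is_cycle_def is_path_def)
  then have "has_cycle n E r"
    using has_cycle_if_is_cycle[of n E UNIV "j # ys"] \<open>length ys = r - 1\<close> \<open>3 \<le> r\<close> by simp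
  then show False using assms(2) by simp
qed

lemma neighbourhood_degree_sum_le:
  assumes "simple_graph n E" "\<not> has_cycle n E r" "3 \<le> r"
  shows "degree_sum (adjacent n E) {i. adjacent n E j i} \<le> (r - 3) * card {i. adjacent n E j i}"
proof -
  have "finite {i. adjacent n E j i}" by (simp add: adjacent_def)
  then have "degree_sum (adjacent n E) {i. adjacent n E j i} \<le> (r - 1 - 2) * card {i. adjacent n E j i}"
    using adjacent_sym[OF assms(1)] adjacent_irrefl[OF assms(1)] neighbourhood_paths_short[OF assms]
    by (rule erdos_gallai_paths)
  then show ?thesis by (simp add: numeral_3_eq_3)
qed

lemma edges_eq_image_ordered_pairs:
  assumes "simple_graph n E"
  shows "edges n E = (\<lambda>(i, j). {i, j}) ` {(i, j). adjacent n E i j \<and> i < j}"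
proof
  show "edges n E \<subseteq> (\<lambda>(i, j). {i, j}) ` {(i, j). adjacent n E i j \<and> i < j}"
  proof
    fix e assume "e \<in> edges n E"
    then obtain i j where e: "e = {i, j}" "adjacent n E i j" unfolding edges_def adjacent_def by blast
    then have "i \<noteq> j" using adjacent_irrefl[OF assms] by blast
    then consider "i < j" | "j < i" by linarith
    then show "e \<in> (\<lambda>(i, j). {i, j}) ` {(i, j). adjacent n E i j \<and> i < j}"
    proof cases
      case 1
      then show ?thesis using e by force
    next
      case 2
      then show ?thesis using e adjacent_sym[OF assms e(2)] by (force simp: insert_commute)
    qed
  qed
  show "(\<lambda>(i, j). {i, j}) ` {(i, j). adjacent n E i j \<and> i < j} \<subseteq> edges n E"
    by (auto simp: edges_def adjacent_def)
qed

lemma degree_sum_adjacent_eq: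
  assumes "simple_graph n E"
  shows "degree_sum (adjacent n E) {..<n} = 2 * num_edges n E"
proof -
  define P1 where "P1 = {(i, j). adjacent n E i j \<and> i < j}"
  define P2 where "P2 = {(i, j). adjacent n E i j \<and> j < i}"
  have pairs: "(SIGMA u:{..<n}. {w\<in>{..<n}. adjacent n E u w}) = P1 \<union> P2"
    using adjacent_irrefl[OF assms] by (auto simp: P1_def P2_def adjacent_def) (metis linorder_neqE_nat)
  have "finite P1" by (rule finite_subset[of _ "{..<n} \<times> {..<n}"]) (auto simp: P1_def adjacent_def)
  have "P2 = prod.swap ` P1"
    using adjacent_sym[OF assms] by (auto simp: P1_def P2_def image_iff)
  then have "finite P2" "card P2 = card P1" using \<open>finite P1\<close> by (simp_all add: card_image)
  moreover have "card P1 = num_edges n E"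
    unfolding num_edges_def edges_eq_image_ordered_pairs[OF assms] P1_def[symmetric]
    by (rule card_image[symmetric]) (auto simp: inj_on_def P1_def doubleton_eq_iff)
  moreover have "P1 \<inter> P2 = {}" by (auto simp: P1_def P2_def)
  ultimately show ?thesis
    unfolding degree_sum_eq_card_pairs[OF finite_lessThan] pairs
    using \<open>finite P1\<close> by (simp add: card_Un_disjoint)
qed

definition adj_entries :: "nat \<Rightarrow> (nat \<Rightarrow> nat \<Rightarrow> bool) \<Rightarrow> nat \<Rightarrow> nat \<Rightarrow> real" where
  "adj_entries n E = (\<lambda>i j. of_bool (adjacent n E i j))"

lemma adj_matrix_carrier: "adj_matrix n E \<in> carrier_mat n n"
  by (simp add: adj_matrix_def)

lemma adj_matrix_index: "i < n \<Longrightarrow> j < n \<Longrightarrow> adj_matrix n E $$ (i, j) = adj_entries n E i j"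
  by (simp add: adj_matrix_def adj_entries_def adjacent_def)

lemma sym_entries_adj_entries: "simple_graph n E \<Longrightarrow> sym_entries n (adj_entries n E)"
  by (simp add: sym_entries_def adj_entries_def adjacent_commute)

lemma bilin_indicator:
  assumes "S \<subseteq> {..<n}"
  shows "bilin n (\<lambda>i j. of_bool (R i j)) (\<lambda>i. of_bool (i \<in> S)) (\<lambda>i. of_bool (i \<in> S))
           = real (degree_sum R S)"
proof -
  have "finite S" using assms finite_subset by blast
  have "(\<Sum>j<n. of_bool (R i j) * of_bool (j \<in> S)) = real (card {w\<in>S. R i w})" for i
  proof -
    have "(\<Sum>j<n. of_bool (R i j) * of_bool (j \<in> S)) = (\<Sum>j<n. of_bool (j \<in> {w\<in>S. R i w}) :: real)"
      by (intro sum.cong) auto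
    also have "\<dots> = real (card ({..<n} \<inter> {w\<in>S. R i w}))" by simp
    also have "{..<n} \<inter> {w\<in>S. R i w} = {w\<in>S. R i w}" using assms by auto
    finally show ?thesis .
  qed
  then have "bilin n (\<lambda>i j. of_bool (R i j)) (\<lambda>i. of_bool (i \<in> S)) (\<lambda>i. of_bool (i \<in> S))
      = (\<Sum>i\<in>S. real (card {w\<in>S. R i w}))"
    using assms by (simp add: bilin_def dot_def mat_vec_def Int_absorb1)
  then show ?thesis by (simp add: degree_sum_def)
qed

lemma column_form_adj_entries:
  assumes "simple_graph n E"
  shows "bilin n (adj_entries n E) (\<lambda>i. adj_entries n E i j) (\<lambda>i. adj_entries n E i j)
           = real (degree_sum (adjacent n E) {i. adjacent n E j i})"
proof -
  have "{i. adjacent n E j i} \<subseteq> {..<n}" by (auto simp: adjacent_def)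
  then have "bilin n (\<lambda>i j. of_bool (adjacent n E i j))
      (\<lambda>i. of_bool (i \<in> {i. adjacent n E j i})) (\<lambda>i. of_bool (i \<in> {i. adjacent n E j i}))
      = real (degree_sum (adjacent n E) {i. adjacent n E j i})"
    by (rule bilin_indicator)
  then show ?thesis by (simp add: adj_entries_def adjacent_commute[OF assms, of j])
qed

lemma sum_adj_entries_eq_degree_sum:
  "(\<Sum>i<n. \<Sum>j<n. adj_entries n E i j) = real (degree_sum (adjacent n E) {..<n})"
  by (simp add: adj_entries_def degree_sum_def Int_def)

lemma degree_sum_adjacent_neighbourhoods:
  "degree_sum (adjacent n E) {..<n} = (\<Sum>j<n. card {i. adjacent n E j i})"
proof -
  have "{w\<in>{..<n}. adjacent n E j w} = {i. adjacent n E j i}" for j by (auto simp: adjacent_def)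
  then show ?thesis by (simp add: degree_sum_def)
qed

lemma sum_column_forms_le:
  assumes "simple_graph n E" "\<not> has_cycle n E r" "3 \<le> r"
  shows "(\<Sum>j<n. bilin n (adj_entries n E) (\<lambda>i. adj_entries n E i j) (\<lambda>i. adj_entries n E i j))
           \<le> (real r - 3) * (\<Sum>i<n. \<Sum>j<n. adj_entries n E i j)"
proof -
  have "(\<Sum>j<n. bilin n (adj_entries n E) (\<lambda>i. adj_entries n E i j) (\<lambda>i. adj_entries n E i j))
      = (\<Sum>j<n. real (degree_sum (adjacent n E) {i. adjacent n E j i}))"
    using column_form_adj_entries[OF assms(1)] by simp
  also have "\<dots> \<le> (\<Sum>j<n. (real r - 3) * real (card {i. adjacent n E j i}))"
    using neighbourhood_degree_sum_le[OF assms] assms(3)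
    by (intro sum_mono) (metis of_nat_le_iff of_nat_mult of_nat_diff of_nat_numeral)
  also have "\<dots> = (real r - 3) * (\<Sum>i<n. \<Sum>j<n. adj_entries n E i j)"
    unfolding sum_adj_entries_eq_degree_sum degree_sum_adjacent_neighbourhoods
    by (simp add: sum_distrib_left)
  finally show ?thesis .
qed

lemma sum_adj_entries:
  assumes "simple_graph n E"
  shows "(\<Sum>i<n. \<Sum>j<n. adj_entries n E i j) = 2 * real (num_edges n E)"
  unfolding sum_adj_entries_eq_degree_sum degree_sum_adjacent_eq[OF assms] by simp

lemma eigenvalue_if_eigenpair:
  fixes A :: "real mat"
  assumes "A \<in> carrier_mat n n" and entries: "\<And>i j. i < n \<Longrightarrow> j < n \<Longrightarrow> A $$ (i, j) = a i j"
    and eig: "eigenpair n a lam v" and "dot n v v \<noteq> 0"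
  shows "eigenvalue A lam"
proof -
  have "vec n v \<noteq> 0\<^sub>v n"
  proof
    assume "vec n v = 0\<^sub>v n"
    then have "\<forall>i<n. v i = 0" by (metis index_vec index_zero_vec(1))
    then show False using \<open>dot n v v \<noteq> 0\<close> by (simp add: dot_def)
  qed
  moreover have "A *\<^sub>v vec n v = lam \<cdot>\<^sub>v vec n v"
  proof (rule eq_vecI)
    fix i assume "i < dim_vec (lam \<cdot>\<^sub>v vec n v)"
    then have "i < n" by simp
    then have "(A *\<^sub>v vec n v) $ i = mat_vec n a v i"
      using assms(1) entries by (auto simp: scalar_prod_def mat_vec_def atLeast0LessThan intro!: sum.cong)
    then show "(A *\<^sub>v vec n v) $ i = (lam \<cdot>\<^sub>v vec n v) $ i"
      using eig \<open>i < n\<close> by (simp add: eigenpair_def)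
  qed (use assms(1) in simp)
  ultimately show ?thesis
    using assms(1) unfolding eigenvalue_def eigenvector_def by (intro exI[of _ "vec n v"]) auto
qed

lemma smallest_eigenvalue_le:
  fixes A :: "real mat"
  assumes "A \<in> carrier_mat n n" "eigenvalue A k"
  shows "smallest_eigenvalue A \<le> k"
proof -
  have "char_poly A \<noteq> 0" using degree_monic_char_poly[OF assms(1)] by auto
  then have "finite {k. poly (char_poly A) k = 0}" by (rule poly_roots_finite)
  then have "finite {k. eigenvalue A k}" using eigenvalue_root_char_poly[OF assms(1)] by simp
  then show ?thesis unfolding smallest_eigenvalue_def using assms(2) by (intro Min_le) auto
qed

lemma smallest_eigenvalue_rayleigh:
  fixes A :: "real mat"
  assumes "A \<in> carrier_mat n n" and entries: "\<And>i j. i < n \<Longrightarrow> j < n \<Longrightarrow> A $$ (i, j) = a i j"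
    and "sym_entries n a" "0 < n"
  shows "smallest_eigenvalue A * dot n x x \<le> bilin n a x x"
proof -
  obtain lam v where "dot n v v = 1" "eigenpair n a lam v" and min: "\<forall>x. lam * dot n x x \<le> bilin n a x x"
    using min_rayleigh_eigenpair[OF assms(3,4)] by blast
  then have "eigenvalue A lam" using eigenvalue_if_eigenpair[OF assms(1) entries] by simp
  then have "smallest_eigenvalue A \<le> lam" by (rule smallest_eigenvalue_le[OF assms(1)])
  then have "smallest_eigenvalue A * dot n x x \<le> lam * dot n x x"
    using dot_self_nonneg by (rule mult_right_mono)
  then show ?thesis using min by (meson order_trans)
qed

theorem corollary5:
  fixes n r :: nat and E :: "nat \<Rightarrow> nat \<Rightarrow> bool"
  assumes "simple_graph n E"
    and "3 \<le> r" and "real r \<le> real n / 2"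
    and "\<not> has_cycle n E r"
  shows "smallest_eigenvalue (adj_matrix n E)
           \<le> - 4 * (real (num_edges n E))^2 / (real n)^3 + 2 * (real r - 3)"
proof -
  \<comment> \<open>The hypothesis \<open>r \<le> n / 2\<close> is only needed for \<open>n > 0\<close>.\<close>
  have "0 < n" using assms(2,3) by simp
  have lower: "smallest_eigenvalue (adj_matrix n E) * dot n x x \<le> bilin n (adj_entries n E) x x" for x
    using adj_matrix_carrier adj_matrix_index sym_entries_adj_entries[OF assms(1)] \<open>0 < n\<close>
    by (rule smallest_eigenvalue_rayleigh)
  have "smallest_eigenvalue (adj_matrix n E)
      \<le> 2 * (real r - 3) - (\<Sum>i<n. \<Sum>j<n. adj_entries n E i j)^2 / n^3"
    by (rule rayleigh_lower_bound_le[OF sym_entries_adj_entries[OF assms(1)] _ \<open>0 < n\<close> lower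
          sum_column_forms_le[OF assms(1,4,2)]])
      (use assms(2) in \<open>auto simp: adj_entries_def\<close>)
  then show ?thesis
    unfolding sum_adj_entries[OF assms(1)] by (simp add: power_mult_distrib)
qed

end
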